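(* Let $G$ be a bus graph, and let $G'$ be the bus graph obtained from $G$ by removing duplicate $\mathcal{C}$-vertices, i.e. keeping exactly one $\mathcal{C}$-vertex from each class of $\mathcal{C}$-vertices having identical neighborhoods in $\mathcal{B}$ (and deleting the others with their edges). Then $G$ is realizable if and only if $G'$ is realizable.
   Context: A bus graph is a finite bipartite graph $G=(\mathcal{B},\mathcal{C};\mathcal{E})$ with $\deg(c)\le 4$ for all $c\in\mathcal{C}$. A realization $\Gamma$ of $G$ in the integer grid is a drawing such that: (1) each $B\in\mathcal{B}$ is drawn as a closed line segment $\Gamma(B)$ along a grid line (a "bus"); (2) each $c\in\mathcal{C}$ is drawn as a grid point $\Gamma(c)$ (a "connector"); (3) each edge $(B,c)\in\mathcal{E}$ is drawn as a closed line segment along a grid line between a point of $\Gamma(B)$ and $\Gamma(c)$, perpendicular to $\Gamma(B)$, containing no connectors or buses other than $\Gamma(B)$ and $\Gamma(c)$ (an edge may meet the bus at an endpoint of the bus; edges may cross other edges); (4) no two buses or connectors intersect. $G$ is realizable if it has such a realization. *)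

theory Defs
  imports Complex_Main
begin

definition bus_graph :: "'b set \<Rightarrow> 'c set \<Rightarrow> ('b \<times> 'c) set \<Rightarrow> bool" where
  "bus_graph Bs Cs E \<longleftrightarrow> finite Bs \<and> finite Cs \<and> E \<subseteq> Bs \<times> Cs \<and>
     (\<forall>c\<in>Cs. card {B\<in>Bs. (B, c) \<in> E} \<le> 4)"

definition nbhd :: "('b \<times> 'c) set \<Rightarrow> 'c \<Rightarrow> 'b set" where
  "nbhd E c = {B. (B, c) \<in> E}"

definition vseg :: "real \<Rightarrow> real \<Rightarrow> real \<Rightarrow> (real \<times> real) set" where
  "vseg x y1 y2 = {(x', y). x' = x \<and> min y1 y2 \<le> y \<and> y \<le> max y1 y2}"

definition hseg :: "real \<Rightarrow> real \<Rightarrow> real \<Rightarrow> (real \<times> real) set" where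
  "hseg y x1 x2 = {(x, y'). y' = y \<and> min x1 x2 \<le> x \<and> x \<le> max x1 x2}"

definition bus_seg :: "('b \<Rightarrow> bool) \<Rightarrow> ('b \<Rightarrow> int) \<Rightarrow> ('b \<Rightarrow> real) \<Rightarrow> ('b \<Rightarrow> real) \<Rightarrow> 'b
    \<Rightarrow> (real \<times> real) set" where
  "bus_seg hor L lo hi B =
     (if hor B then hseg (of_int (L B)) (lo B) (hi B) else vseg (of_int (L B)) (lo B) (hi B))"

definition cpt :: "('c \<Rightarrow> int \<times> int) \<Rightarrow> 'c \<Rightarrow> real \<times> real" where
  "cpt pos c = (of_int (fst (pos c)), of_int (snd (pos c)))"

definition edge_seg :: "('b \<Rightarrow> bool) \<Rightarrow> ('b \<Rightarrow> int) \<Rightarrow> ('c \<Rightarrow> int \<times> int) \<Rightarrow> 'b \<Rightarrow> 'c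
    \<Rightarrow> (real \<times> real) set" where
  "edge_seg hor L pos B c =
     (if hor B then vseg (fst (cpt pos c)) (of_int (L B)) (snd (cpt pos c))
      else hseg (snd (cpt pos c)) (of_int (L B)) (fst (cpt pos c)))"

definition edge_foot :: "('b \<Rightarrow> bool) \<Rightarrow> ('b \<Rightarrow> int) \<Rightarrow> ('c \<Rightarrow> int \<times> int) \<Rightarrow> 'b \<Rightarrow> 'c
    \<Rightarrow> real \<times> real" where
  "edge_foot hor L pos B c =
     (if hor B then (fst (cpt pos c), of_int (L B)) else (of_int (L B), snd (cpt pos c)))"

definition is_realization ::
  "'b set \<Rightarrow> 'c set \<Rightarrow> ('b \<times> 'c) set \<Rightarrow> ('b \<Rightarrow> bool) \<Rightarrow> ('b \<Rightarrow> int) \<Rightarrow> ('b \<Rightarrow> real)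
    \<Rightarrow> ('b \<Rightarrow> real) \<Rightarrow> ('c \<Rightarrow> int \<times> int) \<Rightarrow> bool" where
  "is_realization Bs Cs E hor L lo hi pos \<longleftrightarrow>
     (\<forall>B\<in>Bs. lo B \<le> hi B) \<and>
     (\<forall>B\<in>Bs. \<forall>c. (B, c) \<in> E \<longrightarrow>
        edge_foot hor L pos B c \<in> bus_seg hor L lo hi B \<and>
        (\<forall>B'\<in>Bs. B' \<noteq> B \<longrightarrow> edge_seg hor L pos B c \<inter> bus_seg hor L lo hi B' = {}) \<and>
        (\<forall>c'\<in>Cs. c' \<noteq> c \<longrightarrow> cpt pos c' \<notin> edge_seg hor L pos B c)) \<and>
     (\<forall>B\<in>Bs. \<forall>B'\<in>Bs. B \<noteq> B' \<longrightarrow> bus_seg hor L lo hi B \<inter> bus_seg hor L lo hi B' = {}) \<and>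
     (\<forall>c\<in>Cs. \<forall>c'\<in>Cs. c \<noteq> c' \<longrightarrow> pos c \<noteq> pos c') \<and>
     (\<forall>B\<in>Bs. \<forall>c\<in>Cs. cpt pos c \<notin> bus_seg hor L lo hi B)"

definition realizable :: "'b set \<Rightarrow> 'c set \<Rightarrow> ('b \<times> 'c) set \<Rightarrow> bool" where
  "realizable Bs Cs E \<longleftrightarrow> (\<exists>hor L lo hi pos. is_realization Bs Cs E hor L lo hi pos)"

end

theory Submission imports Defs begin

text \<open>Deleting connectors keeps a realization, so only the converse needs work, and it suffices
  to add a single twin d of a connector c drawn at the grid point (a, b). Insert a fresh
  column x = a + 1 and a fresh row y = b + 1, moving everything beyond them one unit outwards
  and stretching the buses that meet the line x = a (resp. y = b) across the gap; then put d
  at (a + 1, b + 1). Every edge of c has its foot on column a (or row b) of its bus, so the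
  parallel edge of d one unit further lands on the same stretched bus. Squashing the gap back
  maps the new drawing onto the old one, with d sent to c, so any forbidden incidence in the new
  drawing would already occur in the old one -- except between c and d themselves, which differ
  in both coordinates. Neither the degree bound of a bus graph nor the uniqueness of the
  representative kept in Cs' plays a role.\<close>

definition shift_above :: "real \<Rightarrow> real \<Rightarrow> real" where
  "shift_above a u = (if u \<le> a then u else u + 1)"

definition shift_from :: "real \<Rightarrow> real \<Rightarrow> real" where
  "shift_from a u = (if u < a then u else u + 1)"

definition shift_above_int :: "int \<Rightarrow> int \<Rightarrow> int" where
  "shift_above_int a k = (if k \<le> a then k else k + 1)"

definition collapse :: "real \<Rightarrow> real \<Rightarrow> real" where
  "collapse a u = (if u \<le> a then u else if a + 1 \<le> u then u - 1 else a)"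

lemma mono_collapse: "mono (collapse a)"
  by (auto intro!: monoI simp: collapse_def)

lemma collapse_shift_above [simp]: "collapse a (shift_above a u) = u"
  by (auto simp: collapse_def shift_above_def)

lemma collapse_shift_from [simp]: "collapse a (shift_from a u) = u"
  by (auto simp: collapse_def shift_from_def)

lemma collapse_succ [simp]: "collapse a (a + 1) = a"
  by (auto simp: collapse_def)

lemma of_int_shift_above_int [simp]:
  "real_of_int (shift_above_int a k) = shift_above (of_int a) (of_int k)"
  by (auto simp: shift_above_int_def shift_above_def)

lemma shift_above_le_shift_from: "lo \<le> hi \<Longrightarrow> shift_above a lo \<le> shift_from a hi"
  by (auto simp: shift_above_def shift_from_def)

lemma shift_above_between:
  "lo \<le> u \<Longrightarrow> u \<le> hi \<Longrightarrow> shift_above a lo \<le> shift_above a u \<and> shift_above a u \<le> shift_from a hi"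
  by (auto simp: shift_above_def shift_from_def)

lemma succ_between:
  "lo \<le> a \<Longrightarrow> a \<le> hi \<Longrightarrow> shift_above a lo \<le> a + 1 \<and> a + 1 \<le> shift_from a hi"
  by (auto simp: shift_above_def shift_from_def)

lemma mono_between:
  fixes f :: "'a::linorder \<Rightarrow> 'b::linorder"
  assumes "mono f" "min x1 x2 \<le> u" "u \<le> max x1 x2"
  shows "min (f x1) (f x2) \<le> f u \<and> f u \<le> max (f x1) (f x2)"
  using assms monoD[OF \<open>mono f\<close>, of x1 u] monoD[OF \<open>mono f\<close>, of x2 u]
    monoD[OF \<open>mono f\<close>, of u x1] monoD[OF \<open>mono f\<close>, of u x2]
  by (auto simp: min_def max_def split: if_splits)

lemma hseg_mono_image:
  "mono f \<Longrightarrow> mono g \<Longrightarrow> (u, v) \<in> hseg y x1 x2 \<Longrightarrow> (f u, g v) \<in> hseg (g y) (f x1) (f x2)"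
  unfolding hseg_def using mono_between[of f] by auto

lemma vseg_mono_image:
  "mono f \<Longrightarrow> mono g \<Longrightarrow> (u, v) \<in> vseg x y1 y2 \<Longrightarrow> (f u, g v) \<in> vseg (f x) (g y1) (g y2)"
  unfolding vseg_def using mono_between[of g] by auto

lemma is_realization_subset:
  assumes "is_realization Bs Cs E hor L lo hi pos" "Cs' \<subseteq> Cs"
  shows "is_realization Bs Cs' (E \<inter> (Bs \<times> Cs')) hor L lo hi pos"
  using assms unfolding is_realization_def by (simp add: subset_iff)

context
  fixes hor :: "'b \<Rightarrow> bool" and L :: "'b \<Rightarrow> int" and lo hi :: "'b \<Rightarrow> real"
    and pos :: "'c \<Rightarrow> int \<times> int" and a b :: int and c d :: 'c
begin

definition stretched_line :: "'b \<Rightarrow> int" where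
  "stretched_line B = (if hor B then shift_above_int b (L B) else shift_above_int a (L B))"

definition stretched_lo :: "'b \<Rightarrow> real" where
  "stretched_lo B = (if hor B then shift_above (of_int a) (lo B) else shift_above (of_int b) (lo B))"

definition stretched_hi :: "'b \<Rightarrow> real" where
  "stretched_hi B = (if hor B then shift_from (of_int a) (hi B) else shift_from (of_int b) (hi B))"

definition stretched_pos :: "'c \<Rightarrow> int \<times> int" where
  "stretched_pos e = (if e = d then (a + 1, b + 1)
     else (shift_above_int a (fst (pos e)), shift_above_int b (snd (pos e))))"

definition collapse_pt :: "real \<times> real \<Rightarrow> real \<times> real" where
  "collapse_pt p = (collapse (of_int a) (fst p), collapse (of_int b) (snd p))"

definition merge_twin :: "'c \<Rightarrow> 'c" where
  "merge_twin e = (if e = d then c else e)"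

lemma merge_twin_eq: "merge_twin e = merge_twin e' \<Longrightarrow> e \<noteq> e' \<Longrightarrow> {e, e'} = {c, d}"
  by (auto simp: merge_twin_def split: if_splits)

lemma stretched_pos_twins:
  assumes "pos c = (a, b)" "c \<noteq> d"
  shows "stretched_pos c = (a, b)" "stretched_pos d = (a + 1, b + 1)"
  using assms by (simp_all add: stretched_pos_def shift_above_int_def)

lemma collapse_pt_bus_seg:
  assumes "p \<in> bus_seg hor stretched_line stretched_lo stretched_hi B"
  shows "collapse_pt p \<in> bus_seg hor L lo hi B"
proof -
  obtain u v where p: "p = (u, v)" by (cases p)
  show ?thesis
  proof (cases "hor B")
    case True
    then show ?thesis
      using assms hseg_mono_image[OF mono_collapse[of "of_int a"] mono_collapse[of "of_int b"],
          of u v "of_int (stretched_line B)" "stretched_lo B" "stretched_hi B"]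
      by (simp add: p collapse_pt_def bus_seg_def stretched_line_def stretched_lo_def stretched_hi_def)
  next
    case False
    then show ?thesis
      using assms vseg_mono_image[OF mono_collapse[of "of_int a"] mono_collapse[of "of_int b"],
          of u v "of_int (stretched_line B)" "stretched_lo B" "stretched_hi B"]
      by (simp add: p collapse_pt_def bus_seg_def stretched_line_def stretched_lo_def stretched_hi_def)
  qed
qed

lemma collapse_pt_cpt:
  assumes "pos c = (a, b)"
  shows "collapse_pt (cpt stretched_pos e) = cpt pos (merge_twin e)"
  using assms by (simp add: collapse_pt_def cpt_def stretched_pos_def merge_twin_def)

lemma collapse_pt_edge_seg:
  assumes "pos c = (a, b)" and "p \<in> edge_seg hor stretched_line stretched_pos B e"
  shows "collapse_pt p \<in> edge_seg hor L pos B (merge_twin e)"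
proof -
  obtain u v where p: "p = (u, v)" by (cases p)
  have x: "collapse (of_int a) (fst (cpt stretched_pos e)) = fst (cpt pos (merge_twin e))"
    and y: "collapse (of_int b) (snd (cpt stretched_pos e)) = snd (cpt pos (merge_twin e))"
    using collapse_pt_cpt[OF assms(1), of e] by (simp_all add: collapse_pt_def prod_eq_iff)
  show ?thesis
  proof (cases "hor B")
    case True
    then show ?thesis
      using assms(2) vseg_mono_image[OF mono_collapse[of "of_int a"] mono_collapse[of "of_int b"],
          of u v "fst (cpt stretched_pos e)" "of_int (stretched_line B)" "snd (cpt stretched_pos e)"]
      by (simp add: p collapse_pt_def edge_seg_def stretched_line_def x y)
  next
    case False
    then show ?thesis
      using assms(2) hseg_mono_image[OF mono_collapse[of "of_int a"] mono_collapse[of "of_int b"],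
          of u v "snd (cpt stretched_pos e)" "of_int (stretched_line B)" "fst (cpt stretched_pos e)"]
      by (simp add: p collapse_pt_def edge_seg_def stretched_line_def x y)
  qed
qed

lemma stretched_foot_in_bus:
  assumes "pos c = (a, b)" and "lo B \<le> hi B"
    and "edge_foot hor L pos B (merge_twin e) \<in> bus_seg hor L lo hi B"
  shows "edge_foot hor stretched_line stretched_pos B e
           \<in> bus_seg hor stretched_line stretched_lo stretched_hi B"
proof (cases "e = d")
  case True
  then show ?thesis
    using assms succ_between[of "lo B" "of_int a" "hi B"] succ_between[of "lo B" "of_int b" "hi B"]
      shift_above_le_shift_from[of "lo B" "hi B"]
    by (auto simp: edge_foot_def bus_seg_def hseg_def vseg_def cpt_def stretched_pos_def
        merge_twin_def stretched_line_def stretched_lo_def stretched_hi_def)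
next
  case False
  then show ?thesis
    using assms shift_above_between[of "lo B" _ "hi B" "of_int a"]
      shift_above_between[of "lo B" _ "hi B" "of_int b"] shift_above_le_shift_from[of "lo B" "hi B"]
    by (auto simp: edge_foot_def bus_seg_def hseg_def vseg_def cpt_def stretched_pos_def
        merge_twin_def stretched_line_def stretched_lo_def stretched_hi_def)
qed

lemma twin_off_twin_edges:
  assumes "pos c = (a, b)" "c \<noteq> d" "{e, e'} = {c, d}"
  shows "cpt stretched_pos e' \<notin> edge_seg hor stretched_line stretched_pos B e"
  using assms stretched_pos_twins[OF assms(1,2)]
  by (auto simp: doubleton_eq_iff edge_seg_def cpt_def hseg_def vseg_def)

context
  fixes Bs :: "'b set" and S :: "'c set" and E :: "('b \<times> 'c) set"
  assumes realization: "is_realization Bs S (E \<inter> (Bs \<times> S)) hor L lo hi pos"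
    and twin_in: "c \<in> S" and twin_notin: "d \<notin> S"
    and same_nbhd: "\<And>B. (B, d) \<in> E \<longleftrightarrow> (B, c) \<in> E" and pos_twin: "pos c = (a, b)"
begin

lemma twins_distinct: "c \<noteq> d"
  using twin_in twin_notin by blast

lemma merge_twin_in: "e \<in> insert d S \<Longrightarrow> merge_twin e \<in> S"
  using twin_in by (auto simp: merge_twin_def)

lemma stretched_edge_merged:
  "(B, e) \<in> E \<inter> (Bs \<times> insert d S) \<Longrightarrow> (B, merge_twin e) \<in> E \<inter> (Bs \<times> S)"
  using same_nbhd merge_twin_in by (auto simp: merge_twin_def)

lemma stretched_pos_inj:
  assumes "e \<in> insert d S" "e' \<in> insert d S" "e \<noteq> e'"
  shows "stretched_pos e \<noteq> stretched_pos e'"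
proof
  assume eq: "stretched_pos e = stretched_pos e'"
  then have "cpt pos (merge_twin e) = cpt pos (merge_twin e')"
    using collapse_pt_cpt[OF pos_twin] by (metis cpt_def)
  then have "pos (merge_twin e) = pos (merge_twin e')"
    by (simp add: cpt_def prod_eq_iff)
  then have "{e, e'} = {c, d}"
    using realization merge_twin_in assms merge_twin_eq unfolding is_realization_def by metis
  then show False
    using eq stretched_pos_twins[OF pos_twin twins_distinct] by (auto simp: doubleton_eq_iff)
qed

lemma stretched_edge_off_bus:
  assumes "(B, e) \<in> E \<inter> (Bs \<times> insert d S)" "B' \<in> Bs" "B' \<noteq> B"
  shows "edge_seg hor stretched_line stretched_pos B e
           \<inter> bus_seg hor stretched_line stretched_lo stretched_hi B' = {}"
proof -
  have "edge_seg hor L pos B (merge_twin e) \<inter> bus_seg hor L lo hi B' = {}"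
    using realization stretched_edge_merged[OF assms(1)] assms(2,3)
    unfolding is_realization_def by blast
  then show ?thesis
    using collapse_pt_bus_seg collapse_pt_edge_seg[OF pos_twin] by blast
qed

lemma stretched_connector_off_edge:
  assumes "(B, e) \<in> E \<inter> (Bs \<times> insert d S)" "e' \<in> insert d S" "e' \<noteq> e"
  shows "cpt stretched_pos e' \<notin> edge_seg hor stretched_line stretched_pos B e"
proof
  assume on_edge: "cpt stretched_pos e' \<in> edge_seg hor stretched_line stretched_pos B e"
  then have "cpt pos (merge_twin e') \<in> edge_seg hor L pos B (merge_twin e)"
    using collapse_pt_edge_seg[OF pos_twin] collapse_pt_cpt[OF pos_twin] by metis
  then have "merge_twin e' = merge_twin e"
    using realization stretched_edge_merged[OF assms(1)] merge_twin_in[OF assms(2)]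
    unfolding is_realization_def by blast
  then have "{e, e'} = {c, d}"
    using merge_twin_eq assms(3) by metis
  with twin_off_twin_edges[OF pos_twin twins_distinct] on_edge show False
    by blast
qed

lemma stretched_realization:
  "is_realization Bs (insert d S) (E \<inter> (Bs \<times> insert d S))
     hor stretched_line stretched_lo stretched_hi stretched_pos"
proof -
  note R = realization[unfolded is_realization_def]
  show ?thesis
    unfolding is_realization_def
  proof (intro conjI ballI allI impI)
    fix B assume "B \<in> Bs"
    then show "stretched_lo B \<le> stretched_hi B"
      using R by (simp add: stretched_lo_def stretched_hi_def shift_above_le_shift_from)
  next
    fix B e assume "(B, e) \<in> E \<inter> Bs \<times> insert d S"
    then have "(B, merge_twin e) \<in> E \<inter> Bs \<times> S" by (rule stretched_edge_merged)
    then show "edge_foot hor stretched_line stretched_pos B e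
                 \<in> bus_seg hor stretched_line stretched_lo stretched_hi B"
      using R stretched_foot_in_bus[OF pos_twin] by simp
  next
    fix B e B' assume "(B, e) \<in> E \<inter> Bs \<times> insert d S" "B' \<in> Bs" "B' \<noteq> B"
    then show "edge_seg hor stretched_line stretched_pos B e
                 \<inter> bus_seg hor stretched_line stretched_lo stretched_hi B' = {}"
      by (rule stretched_edge_off_bus)
  next
    fix B e e' assume "(B, e) \<in> E \<inter> Bs \<times> insert d S" "e' \<in> insert d S" "e' \<noteq> e"
    then show "cpt stretched_pos e' \<notin> edge_seg hor stretched_line stretched_pos B e"
      by (rule stretched_connector_off_edge)
  next
    fix B B' assume "B \<in> Bs" "B' \<in> Bs" "B \<noteq> B'"
    then show "bus_seg hor stretched_line stretched_lo stretched_hi B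
                 \<inter> bus_seg hor stretched_line stretched_lo stretched_hi B' = {}"
      using R collapse_pt_bus_seg by blast
  next
    fix e e' assume "e \<in> insert d S" "e' \<in> insert d S" "e \<noteq> e'"
    then show "stretched_pos e \<noteq> stretched_pos e'" by (rule stretched_pos_inj)
  next
    fix B e assume "B \<in> Bs" "e \<in> insert d S"
    then have "cpt pos (merge_twin e) \<notin> bus_seg hor L lo hi B"
      using R merge_twin_in by blast
    then show "cpt stretched_pos e \<notin> bus_seg hor stretched_line stretched_lo stretched_hi B"
      using collapse_pt_bus_seg collapse_pt_cpt[OF pos_twin] by metis
  qed
qed

end

end

lemma realizable_insert_twin:
  assumes "realizable Bs S (E \<inter> (Bs \<times> S))" "c \<in> S" "d \<notin> S" "nbhd E d = nbhd E c"
  shows "realizable Bs (insert d S) (E \<inter> (Bs \<times> insert d S))"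
proof -
  obtain hor L lo hi pos where R: "is_realization Bs S (E \<inter> (Bs \<times> S)) hor L lo hi pos"
    using assms(1) unfolding realizable_def by blast
  have "(B, d) \<in> E \<longleftrightarrow> (B, c) \<in> E" for B
    using assms(4) by (auto simp: nbhd_def set_eq_iff)
  from stretched_realization[OF R assms(2,3) this prod.collapse[symmetric]]
  show ?thesis unfolding realizable_def by blast
qed

lemma realizable_union_twins:
  assumes "finite D" "realizable Bs S (E \<inter> (Bs \<times> S))"
    and "\<forall>d\<in>D. \<exists>c\<in>S. nbhd E c = nbhd E d"
  shows "realizable Bs (S \<union> D) (E \<inter> (Bs \<times> (S \<union> D)))"
  using assms
proof (induction D rule: finite_induct)
  case empty
  then show ?case by simp
next
  case (insert d D)
  then have IH: "realizable Bs (S \<union> D) (E \<inter> (Bs \<times> (S \<union> D)))"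
    by blast
  obtain c where "c \<in> S" "nbhd E d = nbhd E c"
    using insert.prems(2) by (metis insertI1)
  show ?case
  proof (cases "d \<in> S")
    case True
    then show ?thesis using IH by (simp add: insert_absorb)
  next
    case False
    then have "d \<notin> S \<union> D" using insert.hyps(2) by blast
    from realizable_insert_twin[OF IH _ this \<open>nbhd E d = nbhd E c\<close>] \<open>c \<in> S\<close>
    show ?thesis by simp
  qed
qed

theorem lemma1:
  fixes Bs :: "'b set" and Cs Cs' :: "'c set" and E :: "('b \<times> 'c) set"
  assumes "bus_graph Bs Cs E"
    and "Cs' \<subseteq> Cs"
    and "\<forall>c\<in>Cs. \<exists>!c'. c' \<in> Cs' \<and> nbhd E c' = nbhd E c"
  shows "realizable Bs Cs E \<longleftrightarrow> realizable Bs Cs' (E \<inter> (Bs \<times> Cs'))"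
proof
  assume "realizable Bs Cs E"
  then show "realizable Bs Cs' (E \<inter> (Bs \<times> Cs'))"
    using is_realization_subset[OF _ assms(2)] unfolding realizable_def by blast
next
  assume "realizable Bs Cs' (E \<inter> (Bs \<times> Cs'))"
  moreover have "finite (Cs - Cs')" and "E \<subseteq> Bs \<times> Cs"
    using assms(1) by (auto simp: bus_graph_def)
  moreover have "\<forall>d\<in>Cs - Cs'. \<exists>c\<in>Cs'. nbhd E c = nbhd E d"
    using assms(3) by (metis DiffD1)
  ultimately show "realizable Bs Cs E"
    using realizable_union_twins[of "Cs - Cs'" Bs Cs' E] assms(2)
    by (simp add: Un_absorb1 Int_absorb2)
qed

end
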